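(* Let $\Gamma$ be a rationally metrised graph and $N\colon\mathrm H^1(\Gamma)\xrightarrow{\sim}\mathrm H_1(\Gamma)$ the isomorphism induced by the cycle pairing. For every edge $e$ of $\Gamma$, \[N(e^* )=\sum_{e'\in E^+}\lambda_{e,e'}\,e'\in\mathbb Q\cdot E^\pm,\qquad \lambda_{e,e'}=\begin{cases}\frac1{\ell(e)}-\frac{\langle\partial(e),\partial(e)\rangle}{\ell(e)^2}&\text{if }e'=e,\\ -\frac{\langle\partial(e),\partial(e')\rangle}{\ell(e)\ell(e')}&\text{if }e'\ne e^{\pm1}.\end{cases}\]
   Context: Rationally metrised graph: finite sets of vertices $V$, oriented edges $E$, half-edges, source $s$, fixed-point-free involution $e\mapsto e^{-1}$ on $E$, $t(e)=s(e^{-1})$, connected, lengths $\ell(e)=\ell(e^{-1})\in\mathbb Q_{>0}$. $E^+$ is the set of unoriented edges ($E$ modulo $e\sim e^{-1}$), each represented by a chosen orientation. $\mathbb Q\cdot E^\pm$ is the span of $E$ mod $e^{-1}=-e$ with edges orthogonal and $\langle e,e\rangle=\ell(e)$; $\partial(e)=t(e)-s(e)\in\mathrm{Div}^0(\Gamma)$ (divisors of total mass $0$); $\mathrm H_1(\Gamma)=\ker\partial$ with restricted (cycle) pairing and $\mathrm H^1(\Gamma)=\mathrm{Hom}(\mathrm H_1(\Gamma),\mathbb Q)$; $N(\xi)$ is the unique class with $\langle N(\xi),\omega\rangle=\xi(\omega)$ for all $\omega\in\mathrm H_1$. $e^*\in\mathrm H^1(\Gamma)$ gives the multiplicity of $e$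 in a homology class. $\langle\cdot,\cdot\rangle$ on $\mathrm{Div}^0$ is the height pairing ${}^t\mathbf uL^{-1}\mathbf v$ with $L$ the Laplacian matrix ($L_{uu}=\sum_{s(e)=u\ne t(e)}1/\ell(e)$, $L_{uv}=-\sum_{s(e)=u,t(e)=v}1/\ell(e)$ for $u\neq v$). *)

theory Defs
  imports Complex_Main
begin

text \<open>A rationally metrised graph is given by a finite vertex set V, a finite set E of
  oriented edges, a source map src, a fixed-point-free involution iv on E
  (e maps to e^{-1}) and a length function len with values in the positive rationals,
  invariant under inversion.\<close>

definition tgt :: "('e \<Rightarrow> 'v) \<Rightarrow> ('e \<Rightarrow> 'e) \<Rightarrow> 'e \<Rightarrow> 'v" where
  "tgt src iv e = src (iv e)"

definition rmgraph ::
  "'v set \<Rightarrow> 'e set \<Rightarrow> ('e \<Rightarrow> 'v) \<Rightarrow> ('e \<Rightarrow> 'e) \<Rightarrow> ('e \<Rightarrow> rat) \<Rightarrow> bool" where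
  "rmgraph V E src iv len \<longleftrightarrow>
     finite V \<and> finite E \<and> V \<noteq> {} \<and>
     (\<forall>e\<in>E. src e \<in> V) \<and>
     (\<forall>e\<in>E. iv e \<in> E \<and> iv (iv e) = e \<and> iv e \<noteq> e) \<and>
     (\<forall>e\<in>E. len e > 0 \<and> len (iv e) = len e) \<and>
     (\<forall>u\<in>V. \<forall>v\<in>V. (u, v) \<in> {(src e, tgt src iv e) | e. e \<in> E}\<^sup>*)"

text \<open>Elements of Q.E^{\<plusminus>}: rational functions on E, antisymmetric under inversion
  (e^{-1} = -e), vanishing outside E.  The element sum_{e\<in>E^+} c_e e corresponds to the
  function taking value c_e at the chosen orientation e and -c_e at e^{-1}.\<close>

definition chains :: "'e set \<Rightarrow> ('e \<Rightarrow> 'e) \<Rightarrow> ('e \<Rightarrow> rat) set" where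
  "chains E iv = {c. (\<forall>e\<in>E. c (iv e) = - c e) \<and> (\<forall>e. e \<notin> E \<longrightarrow> c e = 0)}"

text \<open>Pairing on Q.E^{\<plusminus>}: edges orthogonal, <e,e> = len e.  Summing over all oriented
  edges counts every unoriented edge twice, hence the factor 1/2.\<close>

definition edge_pairing :: "'e set \<Rightarrow> ('e \<Rightarrow> rat) \<Rightarrow> ('e \<Rightarrow> rat) \<Rightarrow> ('e \<Rightarrow> rat) \<Rightarrow> rat" where
  "edge_pairing E len c d = (\<Sum>e\<in>E. len e * c e * d e) / 2"

definition bdry_edge :: "('e \<Rightarrow> 'v) \<Rightarrow> ('e \<Rightarrow> 'e) \<Rightarrow> 'e \<Rightarrow> 'v \<Rightarrow> rat" where
  "bdry_edge src iv e = (\<lambda>x. (if x = tgt src iv e then 1 else 0) - (if x = src e then 1 else 0))"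

text \<open>Boundary of a chain, extended linearly (again each unoriented edge counted twice).\<close>

definition bdry :: "'e set \<Rightarrow> ('e \<Rightarrow> 'v) \<Rightarrow> ('e \<Rightarrow> 'e) \<Rightarrow> ('e \<Rightarrow> rat) \<Rightarrow> 'v \<Rightarrow> rat" where
  "bdry E src iv c = (\<lambda>x. (\<Sum>e\<in>E. c e * bdry_edge src iv e x) / 2)"

definition H1 :: "'e set \<Rightarrow> ('e \<Rightarrow> 'v) \<Rightarrow> ('e \<Rightarrow> 'e) \<Rightarrow> ('e \<Rightarrow> rat) set" where
  "H1 E src iv = {c \<in> chains E iv. \<forall>x. bdry E src iv c x = 0}"

definition Nmap :: "'e set \<Rightarrow> ('e \<Rightarrow> 'v) \<Rightarrow> ('e \<Rightarrow> 'e) \<Rightarrow> ('e \<Rightarrow> rat)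
                    \<Rightarrow> (('e \<Rightarrow> rat) \<Rightarrow> rat) \<Rightarrow> ('e \<Rightarrow> rat)" where
  "Nmap E src iv len xi = (THE c. c \<in> H1 E src iv \<and>
      (\<forall>w\<in>H1 E src iv. edge_pairing E len c w = xi w))"

definition edge_dual :: "'e \<Rightarrow> ('e \<Rightarrow> rat) \<Rightarrow> rat" where
  "edge_dual e = (\<lambda>w. w e)"

definition laplacian :: "'e set \<Rightarrow> ('e \<Rightarrow> 'v) \<Rightarrow> ('e \<Rightarrow> 'e) \<Rightarrow> ('e \<Rightarrow> rat) \<Rightarrow> 'v \<Rightarrow> 'v \<Rightarrow> rat" where
  "laplacian E src iv len u v =
     (if u = v then (\<Sum>e\<in>{e\<in>E. src e = u \<and> tgt src iv e \<noteq> u}. 1 / len e)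
      else - (\<Sum>e\<in>{e\<in>E. src e = u \<and> tgt src iv e = v}. 1 / len e))"

text \<open>Height pairing on Div^0: <u, v> = u^T L^{-1} v, where L^{-1} v denotes a solution w of
  L w = v (which exists for v of total mass 0 on a connected graph; the value is independent
  of the choice since u has total mass 0).\<close>

definition height_pairing :: "'v set \<Rightarrow> 'e set \<Rightarrow> ('e \<Rightarrow> 'v) \<Rightarrow> ('e \<Rightarrow> 'e) \<Rightarrow> ('e \<Rightarrow> rat)
                               \<Rightarrow> ('v \<Rightarrow> rat) \<Rightarrow> ('v \<Rightarrow> rat) \<Rightarrow> rat" where
  "height_pairing V E src iv len u v =
     (let w = (SOME w. \<forall>x\<in>V. (\<Sum>y\<in>V. laplacian E src iv len x y * w y) = v x)
      in (\<Sum>x\<in>V. u x * w x))"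

end

theory Submission
  imports Defs "HOL-Library.Function_Algebras"
begin

text \<open>Let g be a potential with L g = \<partial>(e); it exists because \<partial>(e) has total mass 0 and, the
  graph being connected, the kernel of L consists of the constants.  By Ohm's law g drives the
  current I(e') = (g(t e') - g(s e')) / \<ell>(e'), and Green's identity gives \<partial>(I) = L g = \<partial>(e),
  so e - I is a cycle.  Gradients are orthogonal to cycles, hence
  \<langle>(e - I) / \<ell>(e), w\<rangle> = w(e) for every cycle w, i.e. N(e^*) = (e - I) / \<ell>(e).
  Finally, since L is symmetric, \<langle>\<partial>(e), \<partial>(e')\<rangle> = g(t e') - g(s e') = \<ell>(e') I(e'), which
  gives the coefficients.\<close>

lemma (in vector_space) linear_inj_on_imp_surj_on:
  assumes lin: "Vector_Spaces.linear scale scale f" and S: "subspace S"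
    and fin: "finite B" "S \<subseteq> span B"
    and maps: "f ` S \<subseteq> S" and inj: "inj_on f S"
  shows "f ` S = S"
proof -
  interpret f: Vector_Spaces.linear scale scale f by (rule lin)
  obtain C where C: "C \<subseteq> S" "independent C" "S \<subseteq> span C"
    using maximal_independent_subset by blast
  have span_C: "span C = S"
    using span_subspace[OF C(1,3) S] .
  have fin_C: "finite C"
    using independent_span_bound[OF fin(1) C(2)] C(1) fin(2) by blast
  have indep_fC: "independent (f ` C)"
    using f.independent_injective_image[OF C(2)] inj span_C by simp
  have card_fC: "card (f ` C) = card C"
    using card_image inj_on_subset[OF inj C(1)] by blast
  have "S \<subseteq> span (f ` C)"
  proof
    fix a assume a: "a \<in> S"
    show "a \<in> span (f ` C)"
    proof (rule ccontr)
      assume a_notin: "a \<notin> span (f ` C)"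
      then have "a \<notin> f ` C" using span_base by blast
      then have "card (insert a (f ` C)) = Suc (card C)"
        using fin_C card_fC by simp
      moreover have "card (insert a (f ` C)) \<le> card C"
        using independent_span_bound[OF fin_C independent_insertI[OF a_notin indep_fC]]
          a maps C(1,3) by blast
      ultimately show False by simp
    qed
  qed
  then have "S \<subseteq> f ` S"
    using f.span_image span_C by simp
  with maps show ?thesis by blast
qed

lemma sum_fun_apply: "(\<Sum>i\<in>A. f i) x = (\<Sum>i\<in>A. f i x)"
  for f :: "'i \<Rightarrow> 'a \<Rightarrow> 'b::comm_monoid_add"
  by (induction A rule: infinite_finite_induct) auto

definition fun_scale :: "'b::field \<Rightarrow> ('a \<Rightarrow> 'b) \<Rightarrow> 'a \<Rightarrow> 'b" where
  "fun_scale c f = (\<lambda>x. c * f x)"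

lemma vector_space_fun_scale: "vector_space fun_scale"
  by unfold_locales (auto simp: fun_scale_def fun_eq_iff algebra_simps)

lemma matrix_inj_imp_surj:
  fixes A :: "'a \<Rightarrow> 'a \<Rightarrow> 'b::field"
  assumes fin: "finite V"
    and inj: "\<And>f. \<forall>x\<in>V. (\<Sum>y\<in>V. A x y * f y) = 0 \<Longrightarrow> \<forall>y\<in>V. f y = 0"
  shows "\<exists>f. \<forall>x\<in>V. (\<Sum>y\<in>V. A x y * f y) = v x"
proof -
  interpret vector_space fun_scale by (rule vector_space_fun_scale)
  define T where "T f = (\<lambda>x. if x \<in> V then \<Sum>y\<in>V. A x y * f y else 0)" for f :: "'a \<Rightarrow> 'b"
  define S where "S = {f :: 'a \<Rightarrow> 'b. \<forall>x. x \<notin> V \<longrightarrow> f x = 0}"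
  define delta where "delta x = (\<lambda>y. if y = x then 1 else 0 :: 'b)" for x :: 'a
  have lin: "Vector_Spaces.linear fun_scale fun_scale T"
    unfolding Vector_Spaces.linear_iff
    by (auto simp: vector_space_fun_scale T_def fun_scale_def fun_eq_iff algebra_simps
        sum.distrib sum_distrib_left)
  have subspace: "subspace S"
    by (auto simp: subspace_def S_def fun_scale_def)
  have "f \<in> span (delta ` V)" if "f \<in> S" for f
  proof -
    have "f = (\<Sum>x\<in>V. fun_scale (f x) (delta x))"
      using that fin
      by (auto simp: S_def fun_eq_iff fun_scale_def delta_def sum_fun_apply if_distrib
          cong: if_cong)
    also have "\<dots> \<in> span (delta ` V)"
      by (intro span_sum span_scale span_base) simp
    finally show ?thesis .
  qed
  then have S_span: "S \<subseteq> span (delta ` V)" by blast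
  interpret T: Vector_Spaces.linear fun_scale fun_scale T by (rule lin)
  have "inj_on T S"
    unfolding T.inj_on_iff_eq_0[OF subspace]
  proof (intro ballI impI)
    fix f assume "f \<in> S" "T f = 0"
    then show "f = 0"
      using inj[of f] by (auto simp: S_def T_def fun_eq_iff split: if_splits)
  qed
  moreover have "T ` S \<subseteq> S" by (auto simp: T_def S_def)
  ultimately have "T ` S = S"
    using linear_inj_on_imp_surj_on[OF lin subspace _ S_span] fin by blast
  moreover have "(\<lambda>x. if x \<in> V then v x else 0) \<in> S" by (simp add: S_def)
  ultimately obtain f where "T f = (\<lambda>x. if x \<in> V then v x else 0)" by (metis imageE)
  then show ?thesis by (metis T_def)
qed

lemma edge_pairing_diff:
  "edge_pairing E len (c - d) w = edge_pairing E len c w - edge_pairing E len d w"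
  unfolding edge_pairing_def by (simp add: algebra_simps sum_subtractf diff_divide_distrib)

lemma edge_pairing_diff_divide:
  "edge_pairing E len (\<lambda>e. (c e - d e) / a) w
     = (edge_pairing E len c w - edge_pairing E len d w) / a"
proof -
  have "(\<Sum>e\<in>E. len e * ((c e - d e) / a) * w e)
      = ((\<Sum>e\<in>E. len e * c e * w e) - (\<Sum>e\<in>E. len e * d e * w e)) / a"
    by (simp add: sum_subtractf[symmetric] sum_divide_distrib algebra_simps)
  then show ?thesis
    unfolding edge_pairing_def by (simp add: diff_divide_distrib)
qed

lemma bdry_diff_divide:
  "bdry E src iv (\<lambda>e. (c e - d e) / a) x = (bdry E src iv c x - bdry E src iv d x) / a"
proof -
  have "(\<Sum>e\<in>E. (c e - d e) / a * bdry_edge src iv e x)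
      = ((\<Sum>e\<in>E. c e * bdry_edge src iv e x) - (\<Sum>e\<in>E. d e * bdry_edge src iv e x)) / a"
    by (simp add: sum_subtractf[symmetric] sum_divide_distrib left_diff_distrib)
  then show ?thesis
    unfolding bdry_def by (simp add: diff_divide_distrib)
qed

lemma H1_diff: "c \<in> H1 E src iv \<Longrightarrow> d \<in> H1 E src iv \<Longrightarrow> c - d \<in> H1 E src iv"
  unfolding H1_def chains_def bdry_def
  by (simp add: left_diff_distrib sum_subtractf diff_divide_distrib)

locale metrised_graph =
  fixes V :: "'v set" and E :: "'e set" and src :: "'e \<Rightarrow> 'v" and iv :: "'e \<Rightarrow> 'e"
    and len :: "'e \<Rightarrow> rat"
  assumes rmgraph: "rmgraph V E src iv len"
begin

lemma finite_V: "finite V" and finite_E: "finite E" and V_nonempty: "V \<noteq> {}"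
  and src_in_V: "e \<in> E \<Longrightarrow> src e \<in> V" and iv_in_E: "e \<in> E \<Longrightarrow> iv e \<in> E"
  and iv_iv: "e \<in> E \<Longrightarrow> iv (iv e) = e" and iv_neq: "e \<in> E \<Longrightarrow> iv e \<noteq> e"
  and len_pos: "e \<in> E \<Longrightarrow> len e > 0" and len_iv: "e \<in> E \<Longrightarrow> len (iv e) = len e"
  and connected: "u \<in> V \<Longrightarrow> w \<in> V \<Longrightarrow> (u, w) \<in> {(src e, tgt src iv e) | e. e \<in> E}\<^sup>*"
  using rmgraph unfolding rmgraph_def by auto

lemma tgt_in_V: "e \<in> E \<Longrightarrow> tgt src iv e \<in> V"
  unfolding tgt_def by (simp add: iv_in_E src_in_V)

lemma tgt_iv: "e \<in> E \<Longrightarrow> tgt src iv (iv e) = src e"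
  unfolding tgt_def by (simp add: iv_iv)

lemma sum_reindex_iv: "(\<Sum>e\<in>E. h (iv e)) = (\<Sum>e\<in>E. h e)"
  by (rule sum.reindex_bij_witness[of _ iv iv]) (auto simp: iv_iv iv_in_E)

definition grad :: "('v \<Rightarrow> rat) \<Rightarrow> 'e \<Rightarrow> rat" where
  "grad f e = f (tgt src iv e) - f (src e)"

lemma grad_iv: "e \<in> E \<Longrightarrow> grad f (iv e) = - grad f e"
  unfolding grad_def tgt_def by (simp add: iv_iv)

lemma bdry_edge_outside: "e \<in> E \<Longrightarrow> x \<notin> V \<Longrightarrow> bdry_edge src iv e x = 0"
  unfolding bdry_edge_def using src_in_V tgt_in_V by auto

lemma sum_bdry_edge_mult:
  assumes "e \<in> E"
  shows "(\<Sum>x\<in>V. bdry_edge src iv e x * f x) = grad f e"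
proof -
  have "(\<Sum>x\<in>V. bdry_edge src iv e x * f x)
      = (\<Sum>x\<in>V. (if x = tgt src iv e then f x else 0) - (if x = src e then f x else 0))"
    unfolding bdry_edge_def by (intro sum.cong) (auto simp: left_diff_distrib)
  also have "\<dots> = grad f e"
    using assms finite_V tgt_in_V src_in_V by (simp add: sum_subtractf grad_def)
  finally show ?thesis .
qed

lemma sum_bdry_mult: "(\<Sum>x\<in>V. bdry E src iv c x * f x) = (\<Sum>e\<in>E. c e * grad f e) / 2"
proof -
  have "(\<Sum>x\<in>V. bdry E src iv c x * f x)
      = (\<Sum>e\<in>E. c e * (\<Sum>x\<in>V. bdry_edge src iv e x * f x)) / 2"
    unfolding bdry_def
    by (simp add: sum_divide_distrib[symmetric] sum_distrib_left sum_distrib_right mult_ac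
        sum.swap[of _ V])
  then show ?thesis by (simp add: sum_bdry_edge_mult)
qed

lemma cycle_orthogonal_grad:
  assumes "\<forall>x. bdry E src iv c x = 0"
  shows "(\<Sum>e\<in>E. c e * grad f e) = 0"
  using sum_bdry_mult[of c f] assms by simp

definition lap :: "('v \<Rightarrow> rat) \<Rightarrow> 'v \<Rightarrow> rat" where
  "lap g x = (\<Sum>y\<in>V. laplacian E src iv len x y * g y)"

lemma laplacian_eq_sum:
  "laplacian E src iv len x y = (\<Sum>e\<in>E. if src e = x then
     ((if y = x then 1 else 0) - (if y = tgt src iv e then 1 else 0)) / len e else 0)"
proof (cases "y = x")
  case True
  then show ?thesis unfolding laplacian_def
    by (simp add: sum.inter_filter[OF finite_E]) (intro sum.cong, auto)
next
  case False
  then show ?thesis unfolding laplacian_def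
    by (simp add: sum.inter_filter[OF finite_E] sum_negf[symmetric]) (intro sum.cong, auto)
qed

lemma lap_eq_sum_src: "lap g x = - (\<Sum>e\<in>E. if src e = x then grad g e / len e else 0)"
proof -
  have "lap g x = (\<Sum>e\<in>E. \<Sum>y\<in>V. (if src e = x then
     ((if y = x then 1 else 0) - (if y = tgt src iv e then 1 else 0)) / len e else 0) * g y)"
    unfolding lap_def laplacian_eq_sum by (simp add: sum_distrib_right sum.swap[of _ V])
  also have "\<dots> = (\<Sum>e\<in>E. if src e = x then - grad g e / len e else 0)"
    using finite_V src_in_V tgt_in_V
    by (intro sum.cong) (auto simp: grad_def diff_divide_distrib left_diff_distrib sum_subtractf
        sum_divide_distrib[symmetric] if_distrib[of "\<lambda>z. z * _"] cong: if_cong)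
  finally show ?thesis by (simp add: sum_negf[symmetric] if_distrib cong: if_cong)
qed

lemma lap_outside: "x \<notin> V \<Longrightarrow> lap g x = 0"
  unfolding lap_eq_sum_src using src_in_V by (auto intro!: sum.neutral)

definition current :: "('v \<Rightarrow> rat) \<Rightarrow> 'e \<Rightarrow> rat" where
  "current g e = (if e \<in> E then grad g e / len e else 0)"

lemma current_in_chains: "current g \<in> chains E iv"
  unfolding chains_def current_def by (auto simp: iv_in_E grad_iv len_iv)

lemma bdry_current: "bdry E src iv (current g) = lap g"
proof
  fix x
  let ?out = "\<Sum>e\<in>E. if src e = x then grad g e / len e else 0"
  have "(\<Sum>e\<in>E. if tgt src iv e = x then grad g e / len e else 0) = - ?out"
    by (subst sum_reindex_iv[symmetric])
      (auto simp: tgt_iv grad_iv len_iv sum_negf[symmetric] intro: sum.cong)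
  moreover have "(\<Sum>e\<in>E. current g e * bdry_edge src iv e x)
      = (\<Sum>e\<in>E. if tgt src iv e = x then grad g e / len e else 0) - ?out"
    unfolding current_def bdry_edge_def sum_subtractf[symmetric] by (rule sum.cong) auto
  ultimately have "(\<Sum>e\<in>E. current g e * bdry_edge src iv e x) = - 2 * ?out"
    by simp
  then show "bdry E src iv (current g) x = lap g x"
    unfolding bdry_def lap_eq_sum_src by simp
qed

lemma green_identity: "(\<Sum>x\<in>V. lap g x * f x) = (\<Sum>e\<in>E. grad g e * grad f e / len e) / 2"
  unfolding bdry_current[symmetric] sum_bdry_mult current_def
  by (simp add: mult.commute cong: sum.cong)

lemma sum_lap: "(\<Sum>x\<in>V. lap g x) = 0"
  using green_identity[of g "\<lambda>_. 1"] by (simp add: grad_def)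

lemma lap_eq_0_imp_const:
  assumes h: "\<forall>x\<in>V. lap h x = 0" and "u \<in> V" "w \<in> V"
  shows "h u = h w"
proof -
  have energy: "(\<Sum>e\<in>E. grad h e * grad h e / len e) = 0"
    using green_identity[of h h] h by simp
  have "grad h e = 0" if "e \<in> E" for e
  proof -
    have "grad h e * grad h e / len e = 0"
      by (rule sum_nonneg_0[OF finite_E _ energy that]) (simp add: len_pos less_imp_le)
    then show ?thesis
      using len_pos[OF that] by simp
  qed
  then have edge: "h (src e) = h (tgt src iv e)" if "e \<in> E" for e
    using that unfolding grad_def by simp
  have "(u, w) \<in> {(src e, tgt src iv e) | e. e \<in> E}\<^sup>*"
    using connected \<open>u \<in> V\<close> \<open>w \<in> V\<close> .
  then show ?thesis
    by (induction rule: rtrancl_induct) (auto simp: edge)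
qed

lemma lap_solvable:
  assumes v: "(\<Sum>x\<in>V. v x) = 0"
  shows "\<exists>g. \<forall>x\<in>V. lap g x = v x"
proof -
  txt \<open>L + J, with J the all-ones matrix, is injective on functions on V.\<close>
  have shifted: "(\<Sum>y\<in>V. (laplacian E src iv len x y + 1) * g y) = lap g x + sum g V" for g x
    by (simp add: lap_def distrib_right sum.distrib)
  have card_V: "card V \<noteq> 0"
    using finite_V V_nonempty by simp
  have sum_lap_shifted: "(\<Sum>x\<in>V. lap g x + sum g V) = of_nat (card V) * sum g V" for g
    by (simp add: sum.distrib sum_lap)
  have "\<exists>g. \<forall>x\<in>V. (\<Sum>y\<in>V. (laplacian E src iv len x y + 1) * g y) = v x"
  proof (rule matrix_inj_imp_surj[OF finite_V])
    fix g assume "\<forall>x\<in>V. (\<Sum>y\<in>V. (laplacian E src iv len x y + 1) * g y) = 0"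
    then have g: "\<forall>x\<in>V. lap g x + sum g V = 0"
      by (simp add: shifted)
    then have sum_g: "sum g V = 0"
      using sum_lap_shifted[of g] card_V by simp
    obtain x0 where x0: "x0 \<in> V"
      using V_nonempty by blast
    have const: "g y = g x0" if "y \<in> V" for y
      using lap_eq_0_imp_const[OF _ that x0] g sum_g by simp
    then have "of_nat (card V) * g x0 = 0"
      using sum_g by simp
    then show "\<forall>y\<in>V. g y = 0"
      using const card_V by simp
  qed
  then obtain g where g: "\<forall>x\<in>V. lap g x + sum g V = v x"
    by (auto simp: shifted)
  then have "sum g V = 0"
    using sum_lap_shifted[of g] card_V v by simp
  then show ?thesis
    using g by auto
qed

lemma height_pairing_bdry_edge:
  assumes e2: "e2 \<in> E"
    and g: "\<forall>x\<in>V. lap g x = bdry_edge src iv e1 x"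
  shows "height_pairing V E src iv len (bdry_edge src iv e1) (bdry_edge src iv e2) = grad g e2"
proof -
  define w where "w = (SOME w. \<forall>x\<in>V. lap w x = bdry_edge src iv e2 x)"
  have "\<exists>w. \<forall>x\<in>V. lap w x = bdry_edge src iv e2 x"
    using lap_solvable sum_bdry_edge_mult[OF e2, of "\<lambda>_. 1"] by (simp add: grad_def)
  then have w: "\<forall>x\<in>V. lap w x = bdry_edge src iv e2 x"
    unfolding w_def by (rule someI_ex)
  have "height_pairing V E src iv len (bdry_edge src iv e1) (bdry_edge src iv e2)
      = (\<Sum>x\<in>V. lap g x * w x)"
    using g by (simp add: height_pairing_def w_def lap_def[abs_def])
  also have "\<dots> = (\<Sum>x\<in>V. lap w x * g x)"
    unfolding green_identity by (simp add: mult.commute)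
  also have "\<dots> = grad g e2"
    using w sum_bdry_edge_mult[OF e2] by simp
  finally show ?thesis .
qed

lemma chain_eq_0_if_edge_pairing_self:
  assumes c: "c \<in> chains E iv" and c0: "edge_pairing E len c c = 0"
  shows "c = 0"
proof -
  have "c e = 0" for e
  proof (cases "e \<in> E")
    case True
    have sum0: "(\<Sum>e\<in>E. len e * c e * c e) = 0"
      using c0 by (simp add: edge_pairing_def)
    have "len e * c e * c e = 0"
      by (rule sum_nonneg_0[OF finite_E _ sum0 True]) (simp add: len_pos less_imp_le mult.assoc)
    then show ?thesis
      using len_pos[OF True] by simp
  next
    case False
    then show ?thesis
      using c by (simp add: chains_def)
  qed
  then show ?thesis by (simp add: fun_eq_iff)
qed

lemma Nmap_eqI:
  assumes c: "c \<in> H1 E src iv" and pairing: "\<forall>w\<in>H1 E src iv. edge_pairing E len c w = xi w"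
  shows "Nmap E src iv len xi = c"
  unfolding Nmap_def
proof (rule the_equality)
  show "c \<in> H1 E src iv \<and> (\<forall>w\<in>H1 E src iv. edge_pairing E len c w = xi w)"
    using c pairing by blast
  fix c' assume c': "c' \<in> H1 E src iv \<and> (\<forall>w\<in>H1 E src iv. edge_pairing E len c' w = xi w)"
  then have diff: "c' - c \<in> H1 E src iv"
    using H1_diff c by blast
  then have "edge_pairing E len (c' - c) (c' - c) = 0"
    using c' pairing by (simp add: edge_pairing_diff)
  then have "c' - c = 0"
    using diff by (intro chain_eq_0_if_edge_pairing_self) (simp_all add: H1_def)
  then show "c' = c" by simp
qed

definition edge_chain :: "'e \<Rightarrow> 'e \<Rightarrow> rat" where
  "edge_chain e e' = (if e' = e then 1 else if e' = iv e then -1 else 0)"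

lemma edge_chain_in_chains: "e \<in> E \<Longrightarrow> edge_chain e \<in> chains E iv"
  unfolding chains_def edge_chain_def by (auto simp: iv_in_E iv_iv dest: iv_neq) (metis iv_iv)

lemma sum_edge_chain_mult:
  assumes "e \<in> E"
  shows "(\<Sum>e'\<in>E. edge_chain e e' * f e') = f e - f (iv e)"
proof -
  have "(\<Sum>e'\<in>E. edge_chain e e' * f e')
      = (\<Sum>e'\<in>E. (if e' = e then f e' else 0) - (if e' = iv e then f e' else 0))"
    using iv_neq[OF assms] by (intro sum.cong) (auto simp: edge_chain_def)
  then show ?thesis
    using assms iv_in_E finite_E by (simp add: sum_subtractf)
qed

lemma bdry_edge_chain: "e \<in> E \<Longrightarrow> bdry E src iv (edge_chain e) = bdry_edge src iv e"
  unfolding bdry_def sum_edge_chain_mult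
  by (simp add: fun_eq_iff bdry_edge_def tgt_def iv_iv)

lemma edge_pairing_edge_chain:
  "e \<in> E \<Longrightarrow> w \<in> chains E iv \<Longrightarrow> edge_pairing E len (edge_chain e) w = len e * w e"
  unfolding edge_pairing_def using sum_edge_chain_mult[of e "\<lambda>e'. len e' * w e'"]
  by (simp add: chains_def len_iv mult_ac)

lemma edge_pairing_current_H1:
  assumes "w \<in> H1 E src iv"
  shows "edge_pairing E len (current g) w = 0"
proof -
  have "edge_pairing E len (current g) w = (\<Sum>e\<in>E. w e * grad g e) / 2"
    unfolding edge_pairing_def current_def
    by (intro arg_cong[where f = "\<lambda>t. t / 2"] sum.cong) (auto dest: len_pos)
  then show ?thesis
    using assms cycle_orthogonal_grad by (simp add: H1_def)
qed

definition edge_cycle :: "('v \<Rightarrow> rat) \<Rightarrow> 'e \<Rightarrow> 'e \<Rightarrow> rat" where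
  "edge_cycle g e = (\<lambda>e'. (edge_chain e e' - current g e') / len e)"

lemma edge_cycle_in_H1:
  assumes e: "e \<in> E" and g: "\<forall>x\<in>V. lap g x = bdry_edge src iv e x"
  shows "edge_cycle g e \<in> H1 E src iv"
proof -
  have "edge_cycle g e \<in> chains E iv"
    using edge_chain_in_chains[OF e] current_in_chains[of g]
    by (simp add: edge_cycle_def chains_def diff_divide_distrib)
  moreover have "bdry E src iv (edge_cycle g e) x
      = (bdry_edge src iv e x - lap g x) / len e" for x
    by (simp add: edge_cycle_def bdry_diff_divide bdry_edge_chain[OF e] bdry_current)
  moreover have "bdry_edge src iv e x = lap g x" for x
    using g e by (cases "x \<in> V") (auto simp: bdry_edge_outside lap_outside)
  ultimately show ?thesis
    by (simp add: H1_def)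
qed

lemma edge_pairing_edge_cycle:
  assumes e: "e \<in> E" and w: "w \<in> H1 E src iv"
  shows "edge_pairing E len (edge_cycle g e) w = w e"
proof -
  have "edge_pairing E len (edge_chain e) w = len e * w e"
    using w edge_pairing_edge_chain[OF e] by (simp add: H1_def)
  then show ?thesis
    using edge_pairing_current_H1[OF w] len_pos[OF e]
    by (simp add: edge_cycle_def edge_pairing_diff_divide)
qed

lemma Nmap_edge_dual:
  assumes "e \<in> E" and "\<forall>x\<in>V. lap g x = bdry_edge src iv e x"
  shows "Nmap E src iv len (edge_dual e) = edge_cycle g e"
  using assms
  by (intro Nmap_eqI edge_cycle_in_H1) (auto simp: edge_pairing_edge_cycle edge_dual_def)

end

theorem corollary7p3:
  fixes V :: "'v set" and E :: "'e set" and src :: "'e \<Rightarrow> 'v" and iv :: "'e \<Rightarrow> 'e"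
    and len :: "'e \<Rightarrow> rat" and e :: 'e
  assumes "rmgraph V E src iv len"
    and "e \<in> E"
  shows "Nmap E src iv len (edge_dual e) \<in> chains E iv
    \<and> Nmap E src iv len (edge_dual e) e
        = 1 / len e - height_pairing V E src iv len (bdry_edge src iv e) (bdry_edge src iv e) / (len e)^2
    \<and> (\<forall>e'\<in>E. e' \<noteq> e \<and> e' \<noteq> iv e \<longrightarrow>
         Nmap E src iv len (edge_dual e) e'
           = - height_pairing V E src iv len (bdry_edge src iv e) (bdry_edge src iv e') / (len e * len e'))"
proof -
  interpret metrised_graph V E src iv len
    using assms(1) by (rule metrised_graph.intro)
  obtain g where g: "\<forall>x\<in>V. lap g x = bdry_edge src iv e x"
    using lap_solvable sum_bdry_edge_mult[OF assms(2), of "\<lambda>_. 1"] by (auto simp: grad_def)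
  note N = Nmap_edge_dual[OF assms(2) g]
  have Nmap_at: "Nmap E src iv len (edge_dual e) e'
      = (edge_chain e e' - height_pairing V E src iv len (bdry_edge src iv e) (bdry_edge src iv e')
          / len e') / len e" if "e' \<in> E" for e'
    using height_pairing_bdry_edge[OF that g] that
    by (simp add: N edge_cycle_def current_def)
  show ?thesis
  proof (intro conjI ballI impI)
    show "Nmap E src iv len (edge_dual e) \<in> chains E iv"
      using edge_cycle_in_H1[OF assms(2) g] by (simp add: N H1_def)
    show "Nmap E src iv len (edge_dual e) e
        = 1 / len e - height_pairing V E src iv len (bdry_edge src iv e) (bdry_edge src iv e) / (len e)^2"
      using Nmap_at[OF assms(2)] by (simp add: edge_chain_def power2_eq_square diff_divide_distrib)
    fix e' assume "e' \<in> E" "e' \<noteq> e \<and> e' \<noteq> iv e"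
    then show "Nmap E src iv len (edge_dual e) e'
        = - height_pairing V E src iv len (bdry_edge src iv e) (bdry_edge src iv e') / (len e * len e')"
      using Nmap_at by (simp add: edge_chain_def)
  qed
qed

end
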